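(* For all real $x\ge2$, $x^{-2}+x^{-2/x}<1$. *)

theory Defs
  imports Complex_Main
begin

end

theory Submission
  imports Defs
begin

text \<open>Since \<open>1 - 1/x\<^sup>2 = 1/(1 + u)\<close> with \<open>u = 1/(x\<^sup>2 - 1)\<close> and \<open>exp (-u) \<le> 1/(1 + u)\<close>,
  it suffices that the exponent \<open>(2/x) ln x\<close> of \<open>x powr (-2/x) = exp (-(2/x) ln x)\<close> exceeds \<open>u\<close>.
  For \<open>x \<ge> 2\<close> this follows from \<open>ln x \<ge> 1 - 1/x \<ge> 1/2\<close> and \<open>x\<^sup>2 - 1 > x\<close>.\<close>

lemma ln_ge_one_minus_inverse:
  fixes x :: real
  assumes "0 < x"
  shows "1 - 1 / x \<le> ln x"
  using ln_le_minus_one[of "1 / x"] assms by (simp add: ln_div)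

lemma exp_minus_le_inverse_one_plus:
  fixes u :: real
  assumes "0 \<le> u"
  shows "exp (- u) \<le> 1 / (1 + u)"
  using exp_ge_add_one_self[of u] assms by (simp add: exp_minus field_simps)

lemma powr_minus_lt_one_minus_inverse_square:
  fixes x t :: real
  assumes "1 < x" and "1 / (x\<^sup>2 - 1) < t * ln x"
  shows "x powr (- t) < 1 - 1 / x\<^sup>2"
proof -
  define u where "u = 1 / (x\<^sup>2 - 1)"
  have "1 < x\<^sup>2"
    using assms(1) by (simp add: one_less_power)
  then have "0 < u"
    by (simp add: u_def)
  have "x powr (- t) = exp (- (t * ln x))"
    using assms(1) by (simp add: powr_def)
  also have "\<dots> < exp (- u)"
    using assms(2) by (simp add: u_def)
  also have "\<dots> \<le> 1 / (1 + u)"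
    using \<open>0 < u\<close> by (simp add: exp_minus_le_inverse_one_plus)
  also have "\<dots> = 1 - 1 / x\<^sup>2"
    using \<open>1 < x\<^sup>2\<close> unfolding u_def by (auto simp: field_split_simps)
  finally show ?thesis .
qed

theorem mainTheorem14:
  fixes x :: real
  assumes "x \<ge> 2"
  shows "x powr (-2) + x powr (-2 / x) < 1"
proof -
  have "0 < x"
    using assms by simp
  have "1 / x \<le> 1 / 2"
    using assms by simp
  then have "1 / 2 \<le> ln x"
    using ln_ge_one_minus_inverse[OF \<open>0 < x\<close>] by linarith
  have "2 * x \<le> x * x"
    using assms by (simp add: mult_right_mono)
  then have "x < x\<^sup>2 - 1"
    using assms unfolding power2_eq_square by linarith
  then have "1 / (x\<^sup>2 - 1) < 1 / x"
    using \<open>0 < x\<close> by (simp add: frac_less2)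
  also have "\<dots> \<le> 2 / x * ln x"
    using \<open>1 / 2 \<le> ln x\<close> \<open>0 < x\<close> by (simp add: field_simps)
  finally have "x powr (- (2 / x)) < 1 - 1 / x\<^sup>2"
    using assms by (intro powr_minus_lt_one_minus_inverse_square) simp_all
  moreover have "x powr (-2) = 1 / x\<^sup>2"
    using \<open>0 < x\<close> by (simp add: powr_minus powr_realpow divide_inverse)
  ultimately show ?thesis
    by simp
qed

end
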